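(* Let $S$ be a uniquely $2$-divisible inverse semigroup and let $\alpha$ be an automorphism of $S$ satisfying $\alpha^2 = 1$ and $\mathrm{Fix}(\alpha) = E(S)$. Then $x\alpha = x^{-1}$ for all $x\in S$, and consequently $S$ is commutative.
   Context: A semigroup $S$ is uniquely $2$-divisible if the squaring map $S\to S$, $x\mapsto x^2$, is a bijection. $E(S)$ denotes the set of idempotents of $S$; for an automorphism $\alpha$ of $S$ (written on the right, $x\mapsto x\alpha$), $\mathrm{Fix}(\alpha) = \{x\in S \mid x\alpha = x\}$. In an inverse semigroup, $x^{-1}$ denotes the unique inverse of $x$ (the unique element with $xx^{-1}x=x$ and $x^{-1}xx^{-1}=x^{-1}$). *)

theory Defs
  imports Main
begin

text \<open>Semigroups are modelled by the type class semigroup_mult (S is the whole type).\<close>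

definition inverse_semigroup :: "'a::semigroup_mult itself \<Rightarrow> bool" where
  "inverse_semigroup _ \<longleftrightarrow> (\<forall>x::'a. \<exists>!y. x * y * x = x \<and> y * x * y = y)"

definition sinv :: "'a::semigroup_mult \<Rightarrow> 'a" where
  "sinv x = (THE y. x * y * x = x \<and> y * x * y = y)"

definition uniquely_2_divisible :: "'a::semigroup_mult itself \<Rightarrow> bool" where
  "uniquely_2_divisible _ \<longleftrightarrow> bij (\<lambda>x::'a. x * x)"

definition idempotents :: "'a::semigroup_mult set" where
  "idempotents = {e. e * e = e}"

definition semigroup_automorphism :: "('a::semigroup_mult \<Rightarrow> 'a) \<Rightarrow> bool" where
  "semigroup_automorphism f \<longleftrightarrow> bij f \<and> (\<forall>x y. f (x * y) = f x * f y)"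

definition Fix :: "('a \<Rightarrow> 'a) \<Rightarrow> 'a set" where
  "Fix f = {x. f x = x}"

end

theory Submission
  imports Defs
begin

text \<open>
  Write \<open>x\<inverse>\<close> for sinv x and a = \<alpha> x.  Since \<alpha> fixes idempotents and commutes with
  inversion, x and a have the same idempotents x x\<inverse> and x\<inverse> x, and u = x a\<inverse> satisfies
  \<alpha> u = u\<inverse>.  Let r be the square root of u; then \<alpha> r \<alpha> r = u\<inverse> = r\<inverse> r\<inverse>, so \<alpha> r = r\<inverse>
  by uniqueness of square roots.  Consequently r r\<inverse> is an \<alpha>-fixed idempotent equal to r\<inverse> r,
  the element y = r\<inverse> x is \<alpha>-fixed, hence idempotent, and x = r y.  As x and r have the
  same range idempotent, the idempotent right factor y can be dropped: x = r, so
  \<alpha> x = r\<inverse> = x\<inverse>.  Finally, \<alpha> is multiplicative while inversion reverses products, so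
  inversion and hence multiplication commute.
\<close>

locale inverse_semigroup_type =
  assumes inverse_semigroup: "inverse_semigroup TYPE('a::semigroup_mult)"
begin

lemma sinv_unique_ex: "\<exists>!y. (x::'a) * y * x = x \<and> y * x * y = y"
  using inverse_semigroup unfolding inverse_semigroup_def by blast

lemma sinv_props:
  shows mult_sinv_mult: "(x::'a) * sinv x * x = x"
    and sinv_mult_sinv: "sinv x * x * sinv x = sinv x"
  using theI'[OF sinv_unique_ex[of x]] unfolding sinv_def by auto

lemma sinv_eqI:
  assumes "(x::'a) * y * x = x" and "y * x * y = y"
  shows "sinv x = y"
  unfolding sinv_def using the1_equality[OF sinv_unique_ex] assms by blast

lemma sinv_sinv [simp]: "sinv (sinv (x::'a)) = x"
  by (intro sinv_eqI sinv_props)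

lemma sinv_idempotent: "(e::'a) * e = e \<Longrightarrow> sinv e = e"
  by (intro sinv_eqI) simp_all

lemma idempotent_mult_sinv: "(x::'a) * sinv x * (x * sinv x) = x * sinv x"
  by (metis mult.assoc mult_sinv_mult)

lemma idempotent_sinv_mult: "sinv (x::'a) * x * (sinv x * x) = sinv x * x"
  by (metis mult.assoc mult_sinv_mult)

lemma idempotent_mult:
  assumes e: "(e::'a) * e = e" and f: "f * f = f"
  shows "e * f * (e * f) = e * f"
proof -
  define c where "c = sinv (e * f)"
  have c1: "e * f * c * (e * f) = e * f" and c2: "c * (e * f) * c = c"
    unfolding c_def by (rule sinv_props)+
  \<comment> \<open>f c e is another inverse of e f\<close>
  have "e * f * (f * c * e) * (e * f) = e * f"
    using c1 e f by (metis mult.assoc)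
  moreover have "f * c * e * (e * f) * (f * c * e) = f * c * e"
    using c2 e f by (metis mult.assoc)
  ultimately have c_eq: "c = f * c * e"
    unfolding c_def by (rule sinv_eqI)
  have c_idem: "c * c = c"
  proof -
    have "c * c = f * (c * (e * f) * c) * e"
      using c_eq by (metis mult.assoc)
    also have "\<dots> = c" using c2 c_eq by simp
    finally show ?thesis .
  qed
  have "e * f = sinv c"
    unfolding c_def by simp
  also have "\<dots> = c"
    using c_idem by (rule sinv_idempotent)
  finally show ?thesis
    using c_idem by simp
qed

lemma idempotents_commute:
  assumes e: "(e::'a) * e = e" and f: "f * f = f"
  shows "e * f = f * e"
proof -
  have ef: "e * f * (e * f) = e * f" and fe: "f * e * (f * e) = f * e"
    using idempotent_mult e f by blast+
  have "sinv (e * f) = f * e"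
    using ef fe e f by (intro sinv_eqI) (metis mult.assoc)+
  moreover have "sinv (e * f) = e * f"
    using ef by (rule sinv_idempotent)
  ultimately show ?thesis by simp
qed

lemma sinv_mult: "sinv ((x::'a) * y) = sinv y * sinv x"
proof (rule sinv_eqI)
  have comm: "sinv x * x * (y * sinv y) = y * sinv y * (sinv x * x)"
    using idempotents_commute[OF idempotent_sinv_mult idempotent_mult_sinv] .
  have "x * y * (sinv y * sinv x) * (x * y) = x * (y * sinv y * (sinv x * x)) * y"
    by (simp add: mult.assoc)
  also have "\<dots> = (x * sinv x * x) * (y * sinv y * y)"
    by (metis comm mult.assoc)
  finally show "x * y * (sinv y * sinv x) * (x * y) = x * y"
    by (simp add: mult_sinv_mult)
  have "sinv y * sinv x * (x * y) * (sinv y * sinv x)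
      = sinv y * (sinv x * x * (y * sinv y)) * sinv x"
    by (simp add: mult.assoc)
  also have "\<dots> = (sinv y * y * sinv y) * (sinv x * x * sinv x)"
    by (metis comm mult.assoc)
  finally show "sinv y * sinv x * (x * y) * (sinv y * sinv x) = sinv y * sinv x"
    by (simp add: sinv_mult_sinv)
qed

lemma sinv_hom:
  fixes f :: "'a \<Rightarrow> 'a"
  assumes hom: "\<And>a b. f (a * b) = f a * f b"
  shows "sinv (f x) = f (sinv x)"
  by (rule sinv_eqI) (simp_all flip: hom add: sinv_props)

lemma mult_idempotent_eq_self:
  assumes y: "(y::'a) * y = y"
    and range: "r * y * sinv (r * y) = r * sinv r"
  shows "r * y = r"
proof -
  have "r * y * sinv r = r * sinv r"
    using range y by (metis sinv_mult sinv_idempotent mult.assoc)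
  then have "sinv r * r * y * (sinv r * r) = sinv r * r * (sinv r * r)"
    by (metis mult.assoc)
  then have "sinv r * r * y = sinv r * r"
    using idempotents_commute[OF y idempotent_sinv_mult] y idempotent_sinv_mult
    by (metis mult.assoc)
  then show ?thesis
    by (metis mult.assoc mult_sinv_mult)
qed

lemma commutative_if_sinv_mult:
  assumes "\<And>a b. sinv ((a::'a) * b) = sinv a * sinv b"
  shows "(x::'a) * y = y * x"
  using assms[of "sinv y" "sinv x"] by (simp add: sinv_mult)

end

locale involution_fixing_idempotents = inverse_semigroup_type +
  fixes \<alpha> :: "'a::semigroup_mult \<Rightarrow> 'a"
  assumes unique_sqrt: "uniquely_2_divisible TYPE('a)"
    and hom: "\<And>a b. \<alpha> (a * b) = \<alpha> a * \<alpha> b"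
    and involution: "\<And>a. \<alpha> (\<alpha> a) = a"
    and fixed_iff_idempotent: "\<And>z. \<alpha> z = z \<longleftrightarrow> z * z = z"
begin

lemma sinv_commute: "sinv (\<alpha> x) = \<alpha> (sinv x)"
  using sinv_hom[OF hom] .

lemma sqrt_exists: "\<exists>r. r * r = (z::'a)"
  using unique_sqrt unfolding uniquely_2_divisible_def bij_def surj_def by metis

lemma sq_eqD: "(a::'a) * a = b * b \<Longrightarrow> a = b"
  using unique_sqrt unfolding uniquely_2_divisible_def bij_def inj_def by blast

lemma anti_fixed_sqrt:
  assumes "\<alpha> (r * r) = sinv (r * r)"
  shows "\<alpha> r = sinv r"
proof (rule sq_eqD)
  show "\<alpha> r * \<alpha> r = sinv r * sinv r"
    using assms by (simp add: hom sinv_mult)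
qed

lemma anti_fixed_normal:
  assumes "\<alpha> r = sinv r"
  shows "r * sinv r = sinv r * r"
proof -
  have "\<alpha> (r * sinv r) = sinv r * r"
    using assms by (simp add: hom flip: sinv_commute)
  then show ?thesis
    using fixed_iff_idempotent idempotent_mult_sinv by metis
qed

lemma involution_eq_sinv: "\<alpha> x = sinv x"
proof -
  define a where "a = \<alpha> x"
  define u where "u = x * sinv a"
  have same_domain: "sinv a * a = sinv x * x"
    using fixed_iff_idempotent idempotent_sinv_mult
    unfolding a_def by (metis hom sinv_commute)
  have u_anti_fixed: "\<alpha> u = sinv u"
    unfolding u_def a_def by (simp add: hom involution sinv_mult sinv_commute [symmetric])
  have u_range: "u * sinv u = x * sinv x"
    unfolding u_def sinv_mult sinv_sinv using same_domain mult_sinv_mult by (metis mult.assoc)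
  have a_eq: "sinv u * x = a"
    unfolding u_def sinv_mult sinv_sinv using same_domain mult_sinv_mult by (metis mult.assoc)
  obtain r where r: "r * r = u"
    using sqrt_exists by blast
  have r_anti_fixed: "\<alpha> r = sinv r"
    by (rule anti_fixed_sqrt) (simp add: r u_anti_fixed)
  have normal: "r * sinv r = sinv r * r"
    using r_anti_fixed by (rule anti_fixed_normal)
  have r_range: "r * sinv r = x * sinv x"
  proof -
    have "u * sinv u = r * (r * sinv r) * sinv r"
      unfolding r[symmetric] sinv_mult by (simp add: mult.assoc)
    also have "\<dots> = r * sinv r"
      using normal mult_sinv_mult by (metis mult.assoc)
    finally show ?thesis
      using u_range by simp
  qed
  define y where "y = sinv r * x"
  have "\<alpha> y = r * a"
    unfolding y_def a_def by (simp add: hom r_anti_fixed flip: sinv_commute)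
  also have "\<dots> = r * (sinv r * sinv r * x)"
    using a_eq unfolding r[symmetric] sinv_mult by simp
  also have "\<dots> = y"
    unfolding y_def using normal sinv_mult_sinv by (metis mult.assoc)
  finally have y_idem: "y * y = y"
    using fixed_iff_idempotent by blast
  have x_eq: "r * y = x"
    unfolding y_def using r_range mult_sinv_mult by (metis mult.assoc)
  have "r * y = r"
    using y_idem by (rule mult_idempotent_eq_self) (simp add: x_eq r_range)
  then show ?thesis
    using x_eq r_anti_fixed by simp
qed

end

theorem theorem1p4:
  fixes \<alpha> :: "'a::semigroup_mult \<Rightarrow> 'a"
  assumes "inverse_semigroup TYPE('a)"
    and "uniquely_2_divisible TYPE('a)"
    and "semigroup_automorphism \<alpha>"
    and "\<alpha> \<circ> \<alpha> = id"
    and "Fix \<alpha> = idempotents"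
  shows "(\<forall>x. \<alpha> x = sinv x) \<and> (\<forall>x y::'a. x * y = y * x)"
proof -
  interpret involution_fixing_idempotents \<alpha>
  proof unfold_locales
    show "\<alpha> (a * b) = \<alpha> a * \<alpha> b" for a b
      using assms(3) unfolding semigroup_automorphism_def by blast
    show "\<alpha> (\<alpha> a) = a" for a
      using assms(4) by (metis comp_apply id_apply)
    show "\<alpha> z = z \<longleftrightarrow> z * z = z" for z
      using assms(5) unfolding Fix_def idempotents_def by blast
  qed (fact assms)+
  have "x * y = y * x" for x y :: 'a
    using commutative_if_sinv_mult hom unfolding involution_eq_sinv by blast
  then show ?thesis
    using involution_eq_sinv by blast
qed

end
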